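(* Let $d \geq 0$ be an integer and $\rho > 0$. Let $\mathsf{S}$ be a random sprinkle of density $\rho$ in $(1+d)$-dimensional Minkowski spacetime $\mathbb{M}^{1+d}$, regarded as a poset with the induced causal order. Then, with probability $1$, $\mathsf{S}$ is total locally unsymmetric; that is, almost surely, for every finite subset $F \subseteq \mathsf{S}$, every automorphism of the poset $\mathsf{S} \setminus F$ that moves only finitely many elements is the identity.
   Context: Minkowski spacetime $\mathbb{M}^{1+d} = \mathbb{R}^{1+d}$ with coordinates $(t, x_1,\dots,x_d)$, volume measure $\nu$ the Lebesgue measure, and causal partial order $p \preceq q$ iff $q - p$ is future-directed causal or zero (i.e. $q_0 - p_0 \geq \sqrt{\sum_{i=1}^d (q_i-p_i)^2}$). A sprinkle of density $\rho>0$ is a realisation of the Poisson point process on $\mathbb{M}^{1+d}$ with intensity $\rho\,\nu$: it is a random locally finite subset $\mathsf{S}$ (finite intersection with every compact set) such that for every precompact region $K$, the probability that $\mathsf{S}\cap K$ has exactly $n$ points is $e^{-\rho\nu(K)}\frac{(\rho\nu(K))^n}{n!}$, with points of disjoint regions independent (equivalently, for measurable $B_n$ in the space of $n$-point subsets of $K$, $\mu_K(B_n) = e^{-\rho\nu(K)}\frac{\rho^n}{n!}\nu^n(\Sigma_{K,n}^{-1}(B_n))$, where $\Sigma_{K,n}$ maps $n$-tuples of distinct points of $K$ to the corresponding $n$-element set). The sprinkle is a poset with the restriction of $\preceq$. For a poset $P$, an automorphism $\alpha$ of $P$ is a bijection $P\to P$ preserving and reflecting the order; an element $a$ is fixed if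 $\alpha(a)=a$. A local symmetry of $P$ is a non-identity automorphism of $P$ for which the set of non-fixed elements is finite. For $k \in \mathbb{N}_0$, a poset $P$ is $k$-stable locally unsymmetric if for every subset $S \subseteq P$ with $|S| \leq k$, the poset $P \setminus S$ (with the induced order) has no local symmetries. $P$ is total locally unsymmetric if it is $k$-stable locally unsymmetric for every finite $k \leq |P|$, i.e. removing any finite set of elements leaves a poset without local symmetries. *)

theory Defs
  imports "HOL-Probability.Probability"
begin

text \<open>Minkowski spacetime M^{1+d} is modelled as a Euclidean space 'a with DIM('a) = 1+d
  (so d = DIM('a) - 1 >= 0 is arbitrary), with a chosen basis vector e giving the time
  coordinate; the remaining basis vectors give the spatial coordinates.\<close>

definition causal_le :: "'a::euclidean_space \<Rightarrow> 'a \<Rightarrow> 'a \<Rightarrow> bool" where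
  "causal_le e p q \<longleftrightarrow> (q - p) \<bullet> e \<ge> norm ((q - p) - ((q - p) \<bullet> e) *\<^sub>R e)"

definition poset_automorphism :: "('a \<Rightarrow> 'a \<Rightarrow> bool) \<Rightarrow> 'a set \<Rightarrow> ('a \<Rightarrow> 'a) \<Rightarrow> bool" where
  "poset_automorphism le P \<alpha> \<longleftrightarrow>
     bij_betw \<alpha> P P \<and> (\<forall>x\<in>P. \<forall>y\<in>P. le x y \<longleftrightarrow> le (\<alpha> x) (\<alpha> y))"

definition local_symmetry :: "('a \<Rightarrow> 'a \<Rightarrow> bool) \<Rightarrow> 'a set \<Rightarrow> ('a \<Rightarrow> 'a) \<Rightarrow> bool" where
  "local_symmetry le P \<alpha> \<longleftrightarrow>
     poset_automorphism le P \<alpha> \<and> (\<exists>x\<in>P. \<alpha> x \<noteq> x) \<and> finite {x\<in>P. \<alpha> x \<noteq> x}"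

definition k_stable_locally_unsymmetric :: "('a \<Rightarrow> 'a \<Rightarrow> bool) \<Rightarrow> nat \<Rightarrow> 'a set \<Rightarrow> bool" where
  "k_stable_locally_unsymmetric le k P \<longleftrightarrow>
     (\<forall>F. F \<subseteq> P \<and> finite F \<and> card F \<le> k \<longrightarrow> \<not> (\<exists>\<alpha>. local_symmetry le (P - F) \<alpha>))"

definition total_locally_unsymmetric :: "('a \<Rightarrow> 'a \<Rightarrow> bool) \<Rightarrow> 'a set \<Rightarrow> bool" where
  "total_locally_unsymmetric le P \<longleftrightarrow> (\<forall>k::nat. k_stable_locally_unsymmetric le k P)"

text \<open>A sprinkle of density rho: a random locally finite subset S of 'a on the probability
  space M which is a Poisson point process with intensity rho times Lebesgue measure:
  counts in bounded Borel regions are Poisson distributed and counts in pairwise disjoint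
  bounded Borel regions are independent.\<close>

definition sprinkle :: "'w measure \<Rightarrow> real \<Rightarrow> ('w \<Rightarrow> 'a::euclidean_space set) \<Rightarrow> bool" where
  "sprinkle M \<rho> S \<longleftrightarrow>
     prob_space M \<and>
     (\<forall>\<omega>\<in>space M. \<forall>K. compact K \<longrightarrow> finite (S \<omega> \<inter> K)) \<and>
     (\<forall>K. K \<in> sets borel \<and> bounded K \<longrightarrow>
        (\<lambda>\<omega>. card (S \<omega> \<inter> K)) \<in> measurable M (count_space UNIV) \<and>
        (\<forall>n::nat. measure M {\<omega>\<in>space M. card (S \<omega> \<inter> K) = n} =
           exp (- \<rho> * measure lborel K) * (\<rho> * measure lborel K) ^ n / fact n)) \<and>
     (\<forall>(I::nat set) (K::nat \<Rightarrow> 'a set). finite I \<and> (\<forall>i\<in>I. K i \<in> sets borel \<and> bounded (K i))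
        \<and> disjoint_family_on K I \<longrightarrow>
        prob_space.indep_vars M (\<lambda>_. count_space UNIV) (\<lambda>i \<omega>. card (S \<omega> \<inter> K i)) I)"

end

theory Submission
  imports Defs
begin

text \<open>If a local symmetry of a poset moves x to y, then x and y have the same relation to every
  element outside a finite set. In dimension 1 + 0 the causal order is the linear order of time, and a
  finitely supported automorphism of a chain is trivial. Otherwise, for distinct x and y one can
  order them as a, b and choose a spatial unit vector u such that b - a is not orthogonal to the
  null direction e - u; then, for small rational r and points p, q of a countable dense set near
  a and b, the region of points lying causally after the whole ball around p but after no point of
  the ball around q contains infinitely many disjoint r-balls along a null ray in direction e + u.
  A Poisson sprinkle almost surely puts infinitely many points into each such region, and since
  there are only countably many choices of (p, q, r), almost surely it does so simultaneously for
  all of them. Such a point z, outside the finite support of the symmetry and the removed set,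
  distinguishes x from y, a contradiction.\<close>

lemma local_symmetry_indistinguishable_pair:
  assumes "local_symmetry le P \<alpha>"
  obtains x y A where "x \<in> P" "y \<in> P" "x \<noteq> y" "finite A" "\<forall>z\<in>P - A. le x z \<longleftrightarrow> le y z"
proof -
  define A where "A = {x\<in>P. \<alpha> x \<noteq> x}"
  obtain x where x: "x \<in> P" "\<alpha> x \<noteq> x"
    using assms unfolding local_symmetry_def by blast
  have bij: "bij_betw \<alpha> P P" and pres: "\<forall>x\<in>P. \<forall>y\<in>P. le x y \<longleftrightarrow> le (\<alpha> x) (\<alpha> y)"
    using assms unfolding local_symmetry_def poset_automorphism_def by auto
  have "\<alpha> x \<in> P" using bij x(1) by (rule bij_betw_apply)
  moreover have "finite A" using assms unfolding local_symmetry_def A_def by blast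
  moreover have "le x z \<longleftrightarrow> le (\<alpha> x) z" if "z \<in> P - A" for z
    using pres x(1) that unfolding A_def by force
  ultimately show thesis using that[of x "\<alpha> x" A] x by auto
qed

lemma total_locally_unsymmetric_if_separated:
  assumes sep: "\<And>x y. x \<in> T \<Longrightarrow> y \<in> T \<Longrightarrow> x \<noteq> y \<Longrightarrow>
                  \<exists>a b. {a, b} = {x, y} \<and> infinite {z\<in>T. le a z \<and> \<not> le b z}"
  shows "total_locally_unsymmetric le T"
  unfolding total_locally_unsymmetric_def k_stable_locally_unsymmetric_def
proof (intro allI impI notI)
  fix k F assume F: "F \<subseteq> T \<and> finite F \<and> card F \<le> k"
  assume "\<exists>\<alpha>. local_symmetry le (T - F) \<alpha>"
  then obtain x y A where xy: "x \<in> T - F" "y \<in> T - F" "x \<noteq> y" and "finite A"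
    and indist: "\<forall>z\<in>T - F - A. le x z \<longleftrightarrow> le y z"
    by (metis local_symmetry_indistinguishable_pair)
  obtain a b where ab: "{a, b} = {x, y}" and inf: "infinite {z\<in>T. le a z \<and> \<not> le b z}"
    using sep xy by blast
  have "\<not> {z\<in>T. le a z \<and> \<not> le b z} \<subseteq> F \<union> A"
    using inf F \<open>finite A\<close> finite_subset by blast
  then obtain z where "z \<in> T - F - A" "le a z" "\<not> le b z" by blast
  then show False using indist ab by (auto simp: doubleton_eq_iff)
qed

lemma no_local_symmetry_if_order_embedding:
  fixes f :: "'a \<Rightarrow> 'b::linorder"
  assumes inj: "inj_on f P" and le: "\<And>x y. x \<in> P \<Longrightarrow> y \<in> P \<Longrightarrow> le x y \<longleftrightarrow> f x \<le> f y"
  shows "\<not> local_symmetry le P \<alpha>"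
proof
  assume ls: "local_symmetry le P \<alpha>"
  define A where "A = {x\<in>P. \<alpha> x \<noteq> x}"
  have "finite A" "A \<noteq> {}" and bij: "bij_betw \<alpha> P P"
    and pres: "\<forall>x\<in>P. \<forall>y\<in>P. le x y \<longleftrightarrow> le (\<alpha> x) (\<alpha> y)"
    using ls unfolding local_symmetry_def poset_automorphism_def A_def by auto
  \<comment> \<open>An element of A of least f-value cannot move: its preimage and its image both lie in A.\<close>
  have "Min (f ` A) \<in> f ` A" using \<open>finite A\<close> \<open>A \<noteq> {}\<close> by simp
  then obtain x where x: "x \<in> A" "f x = Min (f ` A)" by (metis imageE)
  have min: "f x \<le> f y" if "y \<in> A" for y
    using x(2) \<open>finite A\<close> that by simp
  have xP: "x \<in> P" and "\<alpha> x \<noteq> x" using x A_def by auto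
  obtain w where w: "w \<in> P" "\<alpha> w = x" using bij xP by (metis bij_betw_iff_bijections)
  have "w \<in> A" using w \<open>\<alpha> x \<noteq> x\<close> A_def by auto
  have axP: "\<alpha> x \<in> P" using bij xP by (rule bij_betw_apply)
  have "\<alpha> (\<alpha> x) \<noteq> \<alpha> x" using bij \<open>\<alpha> x \<noteq> x\<close> xP axP by (metis bij_betw_iff_bijections)
  then have "\<alpha> x \<in> A" using axP A_def by auto
  have "le x w" using min[OF \<open>w \<in> A\<close>] le xP w(1) by simp
  then have "f (\<alpha> x) \<le> f x" using pres le xP w axP by metis
  with min[OF \<open>\<alpha> x \<in> A\<close>] have "f (\<alpha> x) = f x" by simp
  then show False using inj xP axP \<open>\<alpha> x \<noteq> x\<close> by (metis inj_onD)
qed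

lemma causal_le_iff_time_le_if_Basis_singleton:
  fixes e :: "'a::euclidean_space"
  assumes "e \<in> Basis" and "Basis = {e}"
  shows "causal_le e p q \<longleftrightarrow> p \<bullet> e \<le> q \<bullet> e" and "inj (\<lambda>p. p \<bullet> e)"
proof -
  have rep: "w = (w \<bullet> e) *\<^sub>R e" for w :: 'a
    using euclidean_representation[of w] unfolding assms(2) by simp
  show "causal_le e p q \<longleftrightarrow> p \<bullet> e \<le> q \<bullet> e"
    unfolding causal_le_def using rep[of "q - p"] assms(1) by (simp add: inner_diff_left)
  show "inj (\<lambda>p. p \<bullet> e)" by (rule injI) (metis rep)
qed

lemma causal_le_from_ball_to_null_ray_ball:
  fixes e u p a z :: "'a::euclidean_space"
  assumes e: "e \<in> Basis" and u: "u \<bullet> e = 0" "norm u = 1" and t: "t \<ge> 0"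
    and pa: "dist p a < r" and z: "dist (a + (9 * r + t) *\<^sub>R e + t *\<^sub>R u) z < r"
    and a': "a' \<in> ball p r"
  shows "causal_le e a' z"
proof -
  define \<eta> where "\<eta> = (z - (a + (9 * r + t) *\<^sub>R e + t *\<^sub>R u)) - (a' - a)"
  have "dist a' a < 2 * r" using a' pa dist_triangle[of a' a p] by (simp add: dist_commute)
  then have \<eta>: "norm \<eta> < 3 * r"
    using z norm_triangle_ineq4[of "z - (a + (9 * r + t) *\<^sub>R e + t *\<^sub>R u)" "a' - a"]
    unfolding \<eta>_def by (simp add: dist_norm norm_minus_commute)
  have \<eta>e: "\<bar>\<eta> \<bullet> e\<bar> \<le> norm \<eta>" using Basis_le_norm[OF e] by simp
  have d: "z - a' = (9 * r + t) *\<^sub>R e + t *\<^sub>R u + \<eta>"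
    unfolding \<eta>_def by (simp add: algebra_simps)
  have time: "(z - a') \<bullet> e = 9 * r + t + \<eta> \<bullet> e"
    unfolding d using e u by (simp add: inner_add_left)
  have "(z - a') - ((z - a') \<bullet> e) *\<^sub>R e = t *\<^sub>R u + (\<eta> - (\<eta> \<bullet> e) *\<^sub>R e)"
    unfolding time unfolding d by (simp add: algebra_simps)
  also have "norm \<dots> \<le> t + (norm \<eta> + \<bar>\<eta> \<bullet> e\<bar>)"
    using norm_triangle_ineq[of "t *\<^sub>R u" "\<eta> - (\<eta> \<bullet> e) *\<^sub>R e"]
      norm_triangle_ineq4[of \<eta> "(\<eta> \<bullet> e) *\<^sub>R e"] e u t by simp
  finally show ?thesis unfolding causal_le_def using time \<eta> \<eta>e by linarith
qed

lemma not_causal_le_from_ball_to_null_ray_ball: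
  fixes e u q a b z :: "'a::euclidean_space"
  assumes e: "e \<in> Basis" and u: "u \<bullet> e = 0" "norm u = 1"
    and gap: "(b - a) \<bullet> (e - u) > 15 * r"
    and qb: "dist q b < r" and z: "dist (a + (9 * r + t) *\<^sub>R e + t *\<^sub>R u) z < r"
    and b': "b' \<in> ball q r"
  shows "\<not> causal_le e b' z"
proof -
  define \<eta> where "\<eta> = (z - (a + (9 * r + t) *\<^sub>R e + t *\<^sub>R u)) - (b' - b)"
  have "dist b' b < 2 * r" using b' qb dist_triangle[of b' b q] by (simp add: dist_commute)
  then have \<eta>: "norm \<eta> < 3 * r"
    using z norm_triangle_ineq4[of "z - (a + (9 * r + t) *\<^sub>R e + t *\<^sub>R u)" "b' - b"]
    unfolding \<eta>_def by (simp add: dist_norm norm_minus_commute)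
  have \<eta>e: "\<bar>\<eta> \<bullet> e\<bar> \<le> norm \<eta>" using Basis_le_norm[OF e] by simp
  have \<eta>u: "\<bar>\<eta> \<bullet> u\<bar> \<le> norm \<eta>" using Cauchy_Schwarz_ineq2[of \<eta> u] u by simp
  have eu: "e \<bullet> u = 0" and uu: "u \<bullet> u = 1"
    using u by (simp_all add: inner_commute dot_square_norm)
  have d: "z - b' = (9 * r + t) *\<^sub>R e + t *\<^sub>R u - (b - a) + \<eta>"
    unfolding \<eta>_def by (simp add: algebra_simps)
  have time: "(z - b') \<bullet> e = 9 * r + t - (b - a) \<bullet> e + \<eta> \<bullet> e"
    unfolding d using e u by (simp add: inner_add_left inner_diff_left)
  have "t - (b - a) \<bullet> u + \<eta> \<bullet> u = ((z - b') - ((z - b') \<bullet> e) *\<^sub>R e) \<bullet> u"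
    unfolding d by (simp add: inner_add_left inner_diff_left eu uu)
  also have "\<dots> \<le> norm ((z - b') - ((z - b') \<bullet> e) *\<^sub>R e)"
    using norm_cauchy_schwarz[of "(z - b') - ((z - b') \<bullet> e) *\<^sub>R e" u] u by simp
  finally show ?thesis
    unfolding causal_le_def using time gap \<eta> \<eta>e \<eta>u by (simp add: inner_diff_right)
qed

lemma null_ray_balls_disjoint:
  fixes e u :: "'a::euclidean_space"
  assumes e: "e \<in> Basis" and u: "u \<bullet> e = 0" and r: "r \<le> 1/2" and jk: "j \<noteq> k"
  shows "ball (a + (9 * r + real j) *\<^sub>R e + real j *\<^sub>R u) r
       \<inter> ball (a + (9 * r + real k) *\<^sub>R e + real k *\<^sub>R u) r = {}"
proof (rule ccontr)
  let ?c = "\<lambda>k::nat. a + (9 * r + real k) *\<^sub>R e + real k *\<^sub>R u"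
  assume "\<not> ?thesis"
  then obtain z where "dist (?c j) z < r" "dist (?c k) z < r" by auto
  then have "norm (?c j - ?c k) < 1" using dist_triangle[of "?c j" "?c k" z] r
    by (simp add: dist_norm dist_commute norm_minus_commute)
  moreover have "(?c j - ?c k) \<bullet> e = real j - real k"
    using e u by (simp add: inner_add_left inner_diff_left algebra_simps)
  moreover have "\<bar>(?c j - ?c k) \<bullet> e\<bar> \<le> norm (?c j - ?c k)" using Basis_le_norm[OF e] by simp
  ultimately show False using jk by linarith
qed

lemma exists_null_direction_separating:
  fixes x y e :: "'a::euclidean_space"
  assumes e: "e \<in> Basis" and "Basis \<noteq> {e}" and "x \<noteq> y"
  obtains a b u where "{a, b} = {x, y}" "u \<bullet> e = 0" "norm u = 1" "(b - a) \<bullet> (e - u) > 0"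
proof -
  define w where "w = y - x"
  define v where "v = w - (w \<bullet> e) *\<^sub>R e"
  have ve: "v \<bullet> e = 0" unfolding v_def using e by (simp add: inner_diff_left)
  \<comment> \<open>A unit spatial u for which w \<bullet> (e - u) and w \<bullet> (e + u) do not both vanish.\<close>
  obtain u where u: "u \<bullet> e = 0" "norm u = 1" and nz: "w \<bullet> e \<noteq> 0 \<or> w \<bullet> u \<noteq> 0"
  proof (cases "v = 0")
    case True
    obtain f where f: "f \<in> Basis" "f \<noteq> e" using e \<open>Basis \<noteq> {e}\<close> by blast
    have "w \<noteq> 0" using \<open>x \<noteq> y\<close> w_def by simp
    then have "w \<bullet> e \<noteq> 0" using True unfolding v_def by auto
    with f e show thesis using that[of f] by (simp add: inner_not_same_Basis)
  next
    case False
    have "w \<bullet> v = v \<bullet> v"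
      using ve by (simp add: v_def inner_diff_left inner_diff_right inner_commute)
    then have "w \<bullet> ((1 / norm v) *\<^sub>R v) = norm v"
      using False by (simp add: dot_square_norm power2_eq_square)
    then show thesis using that[of "(1 / norm v) *\<^sub>R v"] False ve by simp
  qed
  consider "w \<bullet> (e - u) > 0" | "w \<bullet> (e - u) < 0" | "w \<bullet> (e + u) > 0" | "w \<bullet> (e + u) < 0"
    using nz unfolding inner_diff_right inner_add_right by (smt (verit))
  then show thesis
  proof cases
    case 1 then show thesis using that[of x y u] u w_def by simp
  next
    case 2 then show thesis using that[of y x u] u w_def by (simp add: inner_diff_left insert_commute)
  next
    case 3 then show thesis using that[of x y "- u"] u w_def by simp
  next
    case 4 then show thesis using that[of y x "- u"] u w_def by (simp add: inner_diff_left insert_commute)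
  qed
qed

definition causal_separation_region :: "'a::euclidean_space \<Rightarrow> 'a \<Rightarrow> 'a \<Rightarrow> real \<Rightarrow> 'a set" where
  "causal_separation_region e p q r =
     {z. (\<forall>a\<in>ball p r. causal_le e a z) \<and> (\<forall>b\<in>ball q r. \<not> causal_le e b z)}"

definition contains_disjoint_balls :: "real \<Rightarrow> 'a::metric_space set \<Rightarrow> bool" where
  "contains_disjoint_balls r R \<longleftrightarrow> r > 0 \<and>
     (\<exists>c::nat \<Rightarrow> 'a. (\<forall>j k. j \<noteq> k \<longrightarrow> ball (c j) r \<inter> ball (c k) r = {}) \<and> (\<forall>k. ball (c k) r \<subseteq> R))"

lemma exists_separation_region:
  fixes e :: "'a::euclidean_space"
  assumes e: "e \<in> Basis" and "Basis \<noteq> {e}" and "x \<noteq> y"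
    and dense: "\<And>X. open X \<Longrightarrow> X \<noteq> {} \<Longrightarrow> \<exists>d\<in>D. d \<in> X"
  obtains a b p q r where "{a, b} = {x, y}" "p \<in> D" "q \<in> D" "r \<in> \<rat>" "a \<in> ball p r" "b \<in> ball q r"
    "contains_disjoint_balls r (causal_separation_region e p q r)"
proof -
  obtain a b u where ab: "{a, b} = {x, y}" and u: "u \<bullet> e = 0" "norm u = 1"
    and "(b - a) \<bullet> (e - u) > 0"
    using exists_null_direction_separating[OF assms(1-3)] .
  then obtain r where r: "r \<in> \<rat>" "0 < r" "r < min (1/2) ((b - a) \<bullet> (e - u) / 15)"
    using Rats_dense_in_real[of 0 "min (1/2) ((b - a) \<bullet> (e - u) / 15)"] by auto
  obtain p where p: "p \<in> D" "dist p a < r" using dense[of "ball a r"] r by (auto simp: dist_commute)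
  obtain q where q: "q \<in> D" "dist q b < r" using dense[of "ball b r"] r by (auto simp: dist_commute)
  define c where "c k = a + (9 * r + real k) *\<^sub>R e + real k *\<^sub>R u" for k :: nat
  have "contains_disjoint_balls r (causal_separation_region e p q r)"
    unfolding contains_disjoint_balls_def
  proof (intro conjI exI[of _ c] allI impI subsetI)
    fix j k :: nat assume "j \<noteq> k"
    then show "ball (c j) r \<inter> ball (c k) r = {}"
      unfolding c_def using null_ray_balls_disjoint[OF e u(1)] r by simp
  next
    fix k z assume "z \<in> ball (c k) r"
    then have z: "dist (a + (9 * r + real k) *\<^sub>R e + real k *\<^sub>R u) z < r" by (simp add: c_def)
    show "z \<in> causal_separation_region e p q r"
      unfolding causal_separation_region_def
      using causal_le_from_ball_to_null_ray_ball[OF e u _ p(2) z]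
        not_causal_le_from_ball_to_null_ray_ball[OF e u _ q(2) z] r by auto
  qed (use r in simp)
  with that ab p q r show thesis by auto
qed

lemma sprinkle_prob_space: "sprinkle M \<rho> S \<Longrightarrow> prob_space M"
  unfolding sprinkle_def by blast

lemma sprinkle_avoids:
  fixes S :: "'w \<Rightarrow> 'a::euclidean_space set"
  assumes sp: "sprinkle M \<rho> S" and K: "K \<in> sets borel" "bounded K"
  shows "{\<omega>\<in>space M. S \<omega> \<inter> K = {}} \<in> sets M"
    and "measure M {\<omega>\<in>space M. S \<omega> \<inter> K = {}} = exp (- \<rho> * measure lborel K)"
proof -
  have count: "(\<lambda>\<omega>. card (S \<omega> \<inter> K)) \<in> measurable M (count_space UNIV)"
    and law: "measure M {\<omega>\<in>space M. card (S \<omega> \<inter> K) = 0} = exp (- \<rho> * measure lborel K)"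
    using sp K unfolding sprinkle_def by (auto simp del: of_nat_0)
  have "finite (S \<omega> \<inter> K)" if "\<omega> \<in> space M" for \<omega>
    using sp that K(2) closure_subset[of K] finite_subset
    unfolding sprinkle_def by (metis Int_mono compact_closure order_refl)
  then have eq: "{\<omega>\<in>space M. S \<omega> \<inter> K = {}} = (\<lambda>\<omega>. card (S \<omega> \<inter> K)) -` {0} \<inter> space M"
    by auto
  show "{\<omega>\<in>space M. S \<omega> \<inter> K = {}} \<in> sets M"
    unfolding eq by (rule measurable_sets[OF count]) simp
  show "measure M {\<omega>\<in>space M. S \<omega> \<inter> K = {}} = exp (- \<rho> * measure lborel K)"
    using law unfolding eq by (simp add: Int_commute vimage_def Collect_conj_eq)
qed

lemma sprinkle_AE_infinite:
  fixes S :: "'w \<Rightarrow> 'a::euclidean_space set"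
  assumes sp: "sprinkle M \<rho> S" and \<rho>: "\<rho> > 0" and R: "contains_disjoint_balls r R"
  shows "AE \<omega> in M. infinite (S \<omega> \<inter> R)"
proof -
  interpret prob_space M using sp by (rule sprinkle_prob_space)
  obtain c :: "nat \<Rightarrow> 'a" where r: "r > 0" and disj: "\<And>j k. j \<noteq> k \<Longrightarrow> ball (c j) r \<inter> ball (c k) r = {}"
    and sub: "\<And>k. ball (c k) r \<subseteq> R"
    using R unfolding contains_disjoint_balls_def by blast
  define V where "V = measure lborel (ball (0::'a) r)"
  have V: "measure lborel (ball (c k) r) = V" for k
    unfolding V_def using content_ball[of r "c k"] content_ball[of r "0::'a"] r by simp
  have "V > 0" unfolding V_def using content_ball[of r "0::'a"] r by simp
  define U where "U N m = (\<Union>k\<in>{N..<N+m}. ball (c k) r)" for N m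
  have U: "U N m \<in> sets borel" "bounded (U N m)" for N m
    unfolding U_def by auto
  have "measure lborel (U N m) = (\<Sum>k\<in>{N..<N+m}. measure lborel (ball (c k) r))" for N m
    unfolding U_def using emeasure_lborel_ball_finite
    by (intro measure_finite_Union) (auto simp: disjoint_family_on_def disj less_top)
  then have measure_U: "measure lborel (U N m) = real m * V" for N m
    using V by simp
  define E where "E N m = {\<omega>\<in>space M. S \<omega> \<inter> U N m = {}}" for N m
  have E: "E N m \<in> sets M" "prob (E N m) = exp (- \<rho> * V) ^ m" for N m
    using sprinkle_avoids[OF sp U] unfolding E_def measure_U
    by (simp_all add: exp_of_nat_mult[symmetric] mult_ac)
  have null: "(\<Inter>m. E N m) \<in> null_sets M" for N
  proof -
    have "prob (\<Inter>m. E N m) \<le> exp (- \<rho> * V) ^ m" for m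
      using finite_measure_mono[of "\<Inter>m. E N m" "E N m"] E by auto
    moreover have "(\<lambda>m. exp (- \<rho> * V) ^ m) \<longlonglongrightarrow> 0"
      using \<rho> \<open>V > 0\<close> by (intro LIMSEQ_power_zero) simp
    ultimately have "prob (\<Inter>m. E N m) \<le> 0"
      by (intro LIMSEQ_le_const) auto
    then show ?thesis using E(1) by (auto simp: null_sets_def emeasure_eq_measure intro!: antisym)
  qed
  show ?thesis
  proof (rule AE_I')
    show "(\<Union>N. \<Inter>m. E N m) \<in> null_sets M" using null by (rule null_sets_UN)
  next
    show "{\<omega> \<in> space M. \<not> infinite (S \<omega> \<inter> R)} \<subseteq> (\<Union>N. \<Inter>m. E N m)"
    proof
      fix \<omega> assume \<omega>: "\<omega> \<in> {\<omega> \<in> space M. \<not> infinite (S \<omega> \<inter> R)}"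
      define hit where "hit t = (SOME k. t \<in> ball (c k) r)" for t
      \<comment> \<open>Each point lies in at most one ball, so only finitely many balls are hit.\<close>
      have "{k. S \<omega> \<inter> ball (c k) r \<noteq> {}} \<subseteq> hit ` (S \<omega> \<inter> R)"
      proof
        fix k assume "k \<in> {k. S \<omega> \<inter> ball (c k) r \<noteq> {}}"
        then obtain t where t: "t \<in> S \<omega>" "t \<in> ball (c k) r" by blast
        have "t \<in> ball (c (hit t)) r" unfolding hit_def using t(2) by (rule someI)
        then have "hit t = k" using disj t(2) by blast
        then show "k \<in> hit ` (S \<omega> \<inter> R)" using t sub by blast
      qed
      then have "finite {k. S \<omega> \<inter> ball (c k) r \<noteq> {}}"
        using \<omega> finite_surj by blast
      then obtain N where "{k. S \<omega> \<inter> ball (c k) r \<noteq> {}} \<subseteq> {..<N}"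
        using finite_nat_bounded by blast
      then have "\<omega> \<in> E N m" for m
        using \<omega> unfolding E_def U_def by fastforce
      then show "\<omega> \<in> (\<Union>N. \<Inter>m. E N m)" by blast
    qed
  qed
qed

theorem mainTheorem1:
  fixes M :: "'w measure" and \<rho> :: real and S :: "'w \<Rightarrow> 'a::euclidean_space set" and e :: 'a
  assumes "e \<in> Basis" and "\<rho> > 0" and "sprinkle M \<rho> S"
  shows "AE \<omega> in M. total_locally_unsymmetric (causal_le e) (S \<omega>)"
proof (cases "Basis = {e}")
  case True
  have "\<not> local_symmetry (causal_le e) P \<alpha>" for P \<alpha>
    using causal_le_iff_time_le_if_Basis_singleton[OF assms(1) True]
    by (intro no_local_symmetry_if_order_embedding[of "\<lambda>p. p \<bullet> e"]) (auto intro: inj_on_subset)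
  then have "total_locally_unsymmetric (causal_le e) T" for T
    unfolding total_locally_unsymmetric_def k_stable_locally_unsymmetric_def by blast
  then show ?thesis by simp
next
  case False
  obtain D :: "'a set" where "countable D" and dense: "\<And>X. open X \<Longrightarrow> X \<noteq> {} \<Longrightarrow> \<exists>d\<in>D. d \<in> X"
    by (rule countable_dense_setE) (rule that; assumption)
  let ?R = "\<lambda>(p, q, r). causal_separation_region e p q r"
  have "AE \<omega> in M. \<forall>(p, q, r) \<in> D \<times> D \<times> \<rat>.
          contains_disjoint_balls r (?R (p, q, r)) \<longrightarrow> infinite (S \<omega> \<inter> ?R (p, q, r))"
    using \<open>countable D\<close> countable_rat
    by (intro AE_ball_countable') (auto intro!: AE_impI sprinkle_AE_infinite[OF assms(3,2)])
  then show ?thesis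
  proof (rule AE_mp, intro AE_I2 impI total_locally_unsymmetric_if_separated)
    fix \<omega> and x y :: 'a assume hits: "\<forall>(p, q, r) \<in> D \<times> D \<times> \<rat>.
          contains_disjoint_balls r (?R (p, q, r)) \<longrightarrow> infinite (S \<omega> \<inter> ?R (p, q, r))"
      and "x \<noteq> y"
    obtain a b p q r where ab: "{a, b} = {x, y}" and "p \<in> D" "q \<in> D" "r \<in> \<rat>"
      and "a \<in> ball p r" "b \<in> ball q r"
      and "contains_disjoint_balls r (causal_separation_region e p q r)"
      using exists_separation_region[OF assms(1) False \<open>x \<noteq> y\<close> dense] .
    then have "infinite (S \<omega> \<inter> causal_separation_region e p q r)"
      using hits by auto
    moreover have "S \<omega> \<inter> causal_separation_region e p q r
        \<subseteq> {z\<in>S \<omega>. causal_le e a z \<and> \<not> causal_le e b z}"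
      using \<open>a \<in> ball p r\<close> \<open>b \<in> ball q r\<close> unfolding causal_separation_region_def by blast
    ultimately show "\<exists>a b. {a, b} = {x, y} \<and> infinite {z\<in>S \<omega>. causal_le e a z \<and> \<not> causal_le e b z}"
      using ab infinite_super by blast
  qed
qed

end
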